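(* Let $\mathcal E=\widetilde{\Omega^1_D}(\mathcal A)$ be the bimodule of one-forms of a spectral triple $(\mathcal A,\mathcal H,D)$ and suppose $\mathcal E$ satisfies Assumption III. Endow $\mathcal Z(\mathcal E)\otimes_{\mathcal Z(\mathcal A)}\mathcal A$ with the $\mathcal A$-bimodule structure $b(e\otimes a)c=e\otimes bac$ and $\mathcal A\otimes_{\mathcal Z(\mathcal A)}\mathcal Z(\mathcal E)$ with $b(a\otimes e)c=bac\otimes e$ ($a,b,c\in\mathcal A$, $e\in\mathcal Z(\mathcal E)$). Then there are isomorphisms of $\mathcal A$-$\mathcal A$-bimodules $$\mathcal E\cong\mathcal A\otimes_{\mathcal Z(\mathcal A)}\mathcal Z(\mathcal E)\cong\mathcal Z(\mathcal E)\otimes_{\mathcal Z(\mathcal A)}\mathcal A.$$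
   Context: $\mathcal E$ is the linear span in $B(\mathcal H)$ of $\{a[D,b]:a,b\in\mathcal A\}$, an $\mathcal A$-bimodule. $\mathcal Z(\mathcal E)=\{e:ea=ae\ \forall a\in\mathcal A\}$, $\mathcal Z(\mathcal A)$ the center of $\mathcal A$. Assumption III: $\mathcal Z(\mathcal E)$ is finitely generated and projective over $\mathcal Z(\mathcal A)$, and the map $u^{\mathcal E}:\mathcal Z(\mathcal E)\otimes_{\mathcal Z(\mathcal A)}\mathcal A\to\mathcal E$, $\sum_i e_i\otimes a_i\mapsto\sum_ie_ia_i$, is an isomorphism of vector spaces. *)

theory Defs
  imports Main "HOL-Library.Poly_Mapping"
begin

text \<open>The ambient algebra (containing the operators of A, D and the one-forms) is an
arbitrary ring 'r; the commutator [D,b] is D*b - b*D.\<close>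

definition commut :: "'r::ring \<Rightarrow> 'r \<Rightarrow> 'r" where
  "commut D b = D * b - b * D"

text \<open>A is a unital subring (the complex scalars are not modelled; since A is unital,
the complex linear span of a[D,b] coincides with the additive span).\<close>
definition unital_subring :: "'r::ring_1 set \<Rightarrow> bool" where
  "unital_subring A \<longleftrightarrow> 1 \<in> A \<and> 0 \<in> A \<and>
     (\<forall>x\<in>A. \<forall>y\<in>A. x + y \<in> A \<and> x - y \<in> A \<and> x * y \<in> A \<and> - x \<in> A)"

inductive_set one_forms :: "'r::ring set \<Rightarrow> 'r \<Rightarrow> 'r set" for A D where
  zero: "0 \<in> one_forms A D"
| step: "x \<in> one_forms A D \<Longrightarrow> a \<in> A \<Longrightarrow> b \<in> A \<Longrightarrow> x + a * commut D b \<in> one_forms A D"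

definition centre :: "'r::ring set \<Rightarrow> 'r set" where
  "centre A = {z \<in> A. \<forall>a\<in>A. z * a = a * z}"

definition centralizer_in :: "'r::ring set \<Rightarrow> 'r set \<Rightarrow> 'r set" where
  "centralizer_in A E = {e \<in> E. \<forall>a\<in>A. e * a = a * e}"

text \<open>M (right module over the commutative ring R by ring multiplication) is finitely
generated projective iff it is a direct summand of R^n, i.e. there are R-linear maps
s : M \<rightarrow> R^n and p : R^n \<rightarrow> M with p \<circ> s = id.\<close>
definition free_mod :: "'r::ring set \<Rightarrow> nat \<Rightarrow> (nat \<Rightarrow> 'r) set" where
  "free_mod R n = {v. (\<forall>i. v i \<in> R) \<and> (\<forall>i\<ge>n. v i = 0)}"

definition fg_projective :: "'r::ring set \<Rightarrow> 'r set \<Rightarrow> bool" where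
  "fg_projective R M \<longleftrightarrow> (\<exists>n s p.
      (\<forall>e\<in>M. s e \<in> free_mod R n) \<and> (\<forall>v\<in>free_mod R n. p v \<in> M) \<and>
      (\<forall>e\<in>M. \<forall>e'\<in>M. s (e + e') = (\<lambda>i. s e i + s e' i)) \<and>
      (\<forall>e\<in>M. \<forall>z\<in>R. s (e * z) = (\<lambda>i. s e i * z)) \<and>
      (\<forall>v\<in>free_mod R n. \<forall>w\<in>free_mod R n. p (\<lambda>i. v i + w i) = p v + p w) \<and>
      (\<forall>v\<in>free_mod R n. \<forall>z\<in>R. p (\<lambda>i. v i * z) = p v * z) \<and>
      (\<forall>e\<in>M. p (s e) = e))"

text \<open>Free abelian group on M \<times> N modulo the subgroup generated by the bilinearity and
balancing relations.\<close>

definition tensor_gens :: "'r::ring set \<Rightarrow> 'r set \<Rightarrow> 'r set \<Rightarrow> (('r \<times> 'r) \<Rightarrow>\<^sub>0 int) set" where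
  "tensor_gens M N R =
     {Poly_Mapping.single (m1 + m2, n) 1 - Poly_Mapping.single (m1, n) 1 - Poly_Mapping.single (m2, n) 1 | m1 m2 n. m1 \<in> M \<and> m2 \<in> M \<and> n \<in> N}
   \<union> {Poly_Mapping.single (m, n1 + n2) 1 - Poly_Mapping.single (m, n1) 1 - Poly_Mapping.single (m, n2) 1 | m n1 n2. m \<in> M \<and> n1 \<in> N \<and> n2 \<in> N}
   \<union> {Poly_Mapping.single (m * r, n) 1 - Poly_Mapping.single (m, r * n) 1 | m r n. m \<in> M \<and> r \<in> R \<and> n \<in> N}"

inductive_set tensor_rels :: "'r::ring set \<Rightarrow> 'r set \<Rightarrow> 'r set \<Rightarrow> (('r \<times> 'r) \<Rightarrow>\<^sub>0 int) set"
  for M N R where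
  zero: "0 \<in> tensor_rels M N R"
| add: "x \<in> tensor_rels M N R \<Longrightarrow> g \<in> tensor_gens M N R \<Longrightarrow> x + g \<in> tensor_rels M N R"
| sub: "x \<in> tensor_rels M N R \<Longrightarrow> g \<in> tensor_gens M N R \<Longrightarrow> x - g \<in> tensor_rels M N R"

definition formal_sums :: "'r set \<Rightarrow> 'r set \<Rightarrow> (('r \<times> 'r) \<Rightarrow>\<^sub>0 int) set" where
  "formal_sums M N = {f. Poly_Mapping.keys f \<subseteq> M \<times> N}"

definition tensor_eq :: "'r::ring set \<Rightarrow> 'r set \<Rightarrow> 'r set \<Rightarrow> ((('r \<times> 'r) \<Rightarrow>\<^sub>0 int) \<times> (('r \<times> 'r) \<Rightarrow>\<^sub>0 int)) set" where
  "tensor_eq M N R = {(f, g). f \<in> formal_sums M N \<and> g \<in> formal_sums M N \<and> f - g \<in> tensor_rels M N R}"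

definition tensor :: "'r::ring set \<Rightarrow> 'r set \<Rightarrow> 'r set \<Rightarrow> (('r \<times> 'r) \<Rightarrow>\<^sub>0 int) set set" where
  "tensor M N R = formal_sums M N // tensor_eq M N R"

definition tensor_class :: "'r::ring set \<Rightarrow> 'r set \<Rightarrow> 'r set \<Rightarrow> (('r \<times> 'r) \<Rightarrow>\<^sub>0 int) \<Rightarrow> (('r \<times> 'r) \<Rightarrow>\<^sub>0 int) set" where
  "tensor_class M N R f = tensor_eq M N R `` {f}"

definition tensor_plus :: "'r::ring set \<Rightarrow> 'r set \<Rightarrow> 'r set \<Rightarrow>
    (('r \<times> 'r) \<Rightarrow>\<^sub>0 int) set \<Rightarrow> (('r \<times> 'r) \<Rightarrow>\<^sub>0 int) set \<Rightarrow> (('r \<times> 'r) \<Rightarrow>\<^sub>0 int) set" where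
  "tensor_plus M N R X Y = tensor_class M N R ((SOME f. f \<in> X) + (SOME g. g \<in> Y))"

definition tensor_map :: "'r::ring set \<Rightarrow> 'r set \<Rightarrow> 'r set \<Rightarrow> ('r \<times> 'r \<Rightarrow> 'r \<times> 'r) \<Rightarrow>
    (('r \<times> 'r) \<Rightarrow>\<^sub>0 int) set \<Rightarrow> (('r \<times> 'r) \<Rightarrow>\<^sub>0 int) set" where
  "tensor_map M N R h X = tensor_class M N R (frag_extend (\<lambda>p. Poly_Mapping.single (h p) 1) (SOME f. f \<in> X))"

definition act_right_factor :: "'r::ring set \<Rightarrow> 'r set \<Rightarrow> 'r set \<Rightarrow> 'r \<Rightarrow> 'r \<Rightarrow>
    (('r \<times> 'r) \<Rightarrow>\<^sub>0 int) set \<Rightarrow> (('r \<times> 'r) \<Rightarrow>\<^sub>0 int) set" where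
  "act_right_factor M N R b c = tensor_map M N R (\<lambda>(e, a). (e, b * a * c))"

definition act_left_factor :: "'r::ring set \<Rightarrow> 'r set \<Rightarrow> 'r set \<Rightarrow> 'r \<Rightarrow> 'r \<Rightarrow>
    (('r \<times> 'r) \<Rightarrow>\<^sub>0 int) set \<Rightarrow> (('r \<times> 'r) \<Rightarrow>\<^sub>0 int) set" where
  "act_left_factor M N R b c = tensor_map M N R (\<lambda>(a, e). (b * a * c, e))"

definition mult_map :: "(('r::ring_1 \<times> 'r) \<Rightarrow>\<^sub>0 int) set \<Rightarrow> 'r" where
  "mult_map X = (let f = (SOME f. f \<in> X) in
                  (\<Sum>p\<in>Poly_Mapping.keys f. of_int (Poly_Mapping.lookup f p) * (fst p * snd p)))"

definition bimod_iso :: "'r set \<Rightarrow> 'x set \<Rightarrow> ('x \<Rightarrow> 'x \<Rightarrow> 'x) \<Rightarrow> ('r \<Rightarrow> 'r \<Rightarrow> 'x \<Rightarrow> 'x) \<Rightarrow>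
    'y set \<Rightarrow> ('y \<Rightarrow> 'y \<Rightarrow> 'y) \<Rightarrow> ('r \<Rightarrow> 'r \<Rightarrow> 'y \<Rightarrow> 'y) \<Rightarrow> ('x \<Rightarrow> 'y) \<Rightarrow> bool" where
  "bimod_iso A X plusX actX Y plusY actY \<phi> \<longleftrightarrow>
     bij_betw \<phi> X Y \<and>
     (\<forall>x\<in>X. \<forall>x'\<in>X. \<phi> (plusX x x') = plusY (\<phi> x) (\<phi> x')) \<and>
     (\<forall>b\<in>A. \<forall>c\<in>A. \<forall>x\<in>X. \<phi> (actX b c x) = actY b c (\<phi> x))"

end

theory Submission
  imports Defs
begin

text \<open>Since the elements of Z(E) commute with A, the multiplication map u(e \<otimes> a) = e a
satisfies u(e \<otimes> b a c) = b u(e \<otimes> a) c, and it is additive; so when u is bijective its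
inverse is an isomorphism of bimodules. For the other order of the factors, the flip
a \<otimes> e \<mapsto> e \<otimes> a is well defined on the balanced tensor products (Z(A) is central and Z(E)
commutes with A), is an involution, and commutes with multiplication, so multiplication
A \<otimes> Z(E) \<rightarrow> E is bijective as well.\<close>

definition frag_sum :: "('a \<Rightarrow> 'r::ring_1) \<Rightarrow> ('a \<Rightarrow>\<^sub>0 int) \<Rightarrow> 'r" where
  "frag_sum h f = (\<Sum>p\<in>Poly_Mapping.keys f. of_int (Poly_Mapping.lookup f p) * h p)"

lemma frag_sum_superset:
  assumes "finite S" "Poly_Mapping.keys f \<subseteq> S"
  shows "frag_sum h f = (\<Sum>p\<in>S. of_int (Poly_Mapping.lookup f p) * h p)"
  unfolding frag_sum_def using assms
  by (intro sum.mono_neutral_left) (auto simp: in_keys_iff)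

lemma frag_sum_0 [simp]: "frag_sum h 0 = 0"
  by (simp add: frag_sum_def)

lemma frag_sum_add: "frag_sum h (f + g) = frag_sum h f + frag_sum h g"
proof -
  let ?S = "Poly_Mapping.keys f \<union> Poly_Mapping.keys g"
  have "finite ?S" by simp
  then show ?thesis
    using frag_sum_superset[of ?S "f + g" h] frag_sum_superset[of ?S f h]
      frag_sum_superset[of ?S g h] keys_add[of f g]
    by (simp add: lookup_add distrib_right sum.distrib)
qed

lemma frag_sum_diff: "frag_sum h (f - g) = frag_sum h f - frag_sum h g"
  using frag_sum_add[of h "f - g" g] by (simp add: algebra_simps)

lemma frag_sum_frag_of [simp]: "frag_sum h (frag_of p) = h p"
  by (simp add: frag_sum_def keys_frag_of)

lemma frag_sum_frag_extend:
  "frag_sum h (frag_extend (\<lambda>p. frag_of (k p)) f) = frag_sum (h \<circ> k) f"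
  using subset_UNIV
  by (induction f rule: frag_induction) (auto simp: frag_extend_diff frag_sum_diff)

lemma frag_sum_cong:
  "(\<And>p. p \<in> Poly_Mapping.keys f \<Longrightarrow> h p = h' p) \<Longrightarrow> frag_sum h f = frag_sum h' f"
  unfolding frag_sum_def by simp

lemma frag_sum_sandwich: "b * frag_sum h f * c = frag_sum (\<lambda>p. b * h p * c) f"
  unfolding frag_sum_def sum_distrib_left sum_distrib_right
  by (simp add: mult_of_int_commute mult.assoc)

abbreviation mult_pair :: "'r::times \<times> 'r \<Rightarrow> 'r" where
  "mult_pair p \<equiv> fst p * snd p"

lemma mult_map_eq_frag_sum: "mult_map X = frag_sum mult_pair (SOME f. f \<in> X)"
  by (simp add: mult_map_def frag_sum_def Let_def)

lemma tensor_rels_add: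
  assumes "x \<in> tensor_rels M N R" "y \<in> tensor_rels M N R"
  shows "x + y \<in> tensor_rels M N R"
  using assms(2)
proof (induction y rule: tensor_rels.induct)
  case zero
  then show ?case using assms(1) by simp
next
  case (add y g)
  have "x + y + g \<in> tensor_rels M N R" by (rule tensor_rels.add[OF add.IH add.hyps(2)])
  then show ?case by (simp add: add.assoc)
next
  case (sub y g)
  have "x + y - g \<in> tensor_rels M N R" by (rule tensor_rels.sub[OF sub.IH sub.hyps(2)])
  then show ?case by (simp add: add_diff_eq)
qed

lemma tensor_rels_uminus: "x \<in> tensor_rels M N R \<Longrightarrow> - x \<in> tensor_rels M N R"
proof (induction x rule: tensor_rels.induct)
  case zero
  then show ?case by (simp add: tensor_rels.zero)
next
  case (add y g)
  have "- y - g \<in> tensor_rels M N R" by (rule tensor_rels.sub[OF add.IH add.hyps(2)])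
  moreover have "- (y + g) = - y - g" by simp
  ultimately show ?case by simp
next
  case (sub y g)
  have "- y + g \<in> tensor_rels M N R" by (rule tensor_rels.add[OF sub.IH sub.hyps(2)])
  moreover have "- (y - g) = - y + g" by simp
  ultimately show ?case by simp
qed

lemma tensor_rels_diff:
  "x \<in> tensor_rels M N R \<Longrightarrow> y \<in> tensor_rels M N R \<Longrightarrow> x - y \<in> tensor_rels M N R"
  using tensor_rels_add[of x M N R "- y"] tensor_rels_uminus[of y M N R] by simp

lemma tensor_gens_subset_rels: "tensor_gens M N R \<subseteq> tensor_rels M N R"
  using tensor_rels.add[OF tensor_rels.zero] by fastforce

lemma frag_sum_mult_tensor_rels:
  "x \<in> tensor_rels M N R \<Longrightarrow> frag_sum mult_pair x = (0::'r::ring_1)"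
proof (induction x rule: tensor_rels.induct)
  have gens: "frag_sum mult_pair g = (0::'r)" if "g \<in> tensor_gens M N R" for g
    using that unfolding tensor_gens_def
    by (auto simp: frag_sum_diff distrib_left distrib_right mult.assoc)
  case zero then show ?case by simp
  case add then show ?case using gens by (simp add: frag_sum_add)
  case sub then show ?case using gens by (simp add: frag_sum_diff)
qed

lemma equiv_tensor_eq: "equiv (formal_sums M N) (tensor_eq M N R)"
proof (rule equivI)
  show "tensor_eq M N R \<subseteq> formal_sums M N \<times> formal_sums M N"
    by (auto simp: tensor_eq_def)
  show "refl_on (formal_sums M N) (tensor_eq M N R)"
    by (simp add: refl_on_def tensor_eq_def tensor_rels.zero)
  show "sym (tensor_eq M N R)"
    unfolding sym_def tensor_eq_def using tensor_rels_uminus by fastforce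
  show "trans (tensor_eq M N R)"
    unfolding trans_def tensor_eq_def using tensor_rels_add by fastforce
qed

lemma tensor_class_in_tensor:
  "f \<in> formal_sums M N \<Longrightarrow> tensor_class M N R f \<in> tensor M N R"
  unfolding tensor_def tensor_class_def by (rule quotientI)

lemma tensor_class_eq_iff:
  assumes "f \<in> formal_sums M N" "g \<in> formal_sums M N"
  shows "tensor_class M N R f = tensor_class M N R g \<longleftrightarrow> f - g \<in> tensor_rels M N R"
  unfolding tensor_class_def eq_equiv_class_iff[OF equiv_tensor_eq assms]
  using assms by (simp add: tensor_eq_def)

lemma tensor_some_rep:
  assumes "X \<in> tensor M N R"
  shows "(SOME f. f \<in> X) \<in> formal_sums M N"
    and "X = tensor_class M N R (SOME f. f \<in> X)"
proof -
  obtain x where x: "x \<in> formal_sums M N" and X: "X = tensor_eq M N R `` {x}"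
    using assms unfolding tensor_def by (auto elim: quotientE)
  then have "x \<in> X" using equiv_class_self[OF equiv_tensor_eq] by simp
  then have rep: "(x, SOME f. f \<in> X) \<in> tensor_eq M N R"
    using X by (metis Image_singleton_iff someI)
  then show "(SOME f. f \<in> X) \<in> formal_sums M N"
    by (simp add: tensor_eq_def)
  have "tensor_eq M N R `` {x} = tensor_eq M N R `` {SOME f. f \<in> X}"
    by (rule equiv_class_eq[OF equiv_tensor_eq rep])
  then show "X = tensor_class M N R (SOME f. f \<in> X)"
    unfolding tensor_class_def by (simp only: X[symmetric])
qed

lemma mult_map_tensor_class:
  assumes "f \<in> formal_sums M N"
  shows "mult_map (tensor_class M N R f) = (frag_sum mult_pair f :: 'r::ring_1)"
proof -
  have "f \<in> tensor_class M N R f"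
    using assms equiv_class_self[OF equiv_tensor_eq] by (simp add: tensor_class_def)
  then have "(SOME g. g \<in> tensor_class M N R f) \<in> tensor_class M N R f" by (rule someI)
  moreover have "f - g \<in> tensor_rels M N R" if "g \<in> tensor_class M N R f" for g
    using that by (simp add: tensor_class_def tensor_eq_def)
  ultimately have "frag_sum mult_pair (f - (SOME g. g \<in> tensor_class M N R f)) = (0::'r)"
    by (blast intro: frag_sum_mult_tensor_rels)
  then show ?thesis by (simp add: mult_map_eq_frag_sum frag_sum_diff)
qed

lemma formal_sums_frag_extend:
  assumes "f \<in> formal_sums M N" "\<And>p. p \<in> M \<times> N \<Longrightarrow> k p \<in> M' \<times> N'"
  shows "frag_extend (\<lambda>p. frag_of (k p)) f \<in> formal_sums M' N'"
proof -
  have "Poly_Mapping.keys (frag_extend (\<lambda>p. frag_of (k p)) f) \<subseteq> k ` Poly_Mapping.keys f"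
    using keys_frag_extend[of "\<lambda>p. frag_of (k p)" f] by (auto simp: keys_frag_of)
  also have "\<dots> \<subseteq> M' \<times> N'"
    using assms unfolding formal_sums_def by blast
  finally show ?thesis unfolding formal_sums_def by simp
qed

lemma
  assumes "X \<in> tensor M N R" "Y \<in> tensor M N R"
  shows tensor_plus_in_tensor: "tensor_plus M N R X Y \<in> tensor M N R"
    and mult_map_tensor_plus:
      "mult_map (tensor_plus M N R X Y) = (mult_map X + mult_map Y :: 'r::ring_1)"
proof -
  let ?f = "SOME f. f \<in> X" and ?g = "SOME g. g \<in> Y"
  have "?f + ?g \<in> formal_sums M N"
    using tensor_some_rep(1)[OF assms(1)] tensor_some_rep(1)[OF assms(2)] keys_add[of ?f ?g]
    by (auto simp: formal_sums_def)
  then show "tensor_plus M N R X Y \<in> tensor M N R"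
    and "mult_map (tensor_plus M N R X Y) = (mult_map X + mult_map Y :: 'r)"
    unfolding tensor_plus_def mult_map_eq_frag_sum[of X] mult_map_eq_frag_sum[of Y]
    by (simp_all add: tensor_class_in_tensor mult_map_tensor_class frag_sum_add)
qed

lemma
  assumes "X \<in> tensor M N R" and closed: "\<And>p. p \<in> M \<times> N \<Longrightarrow> k p \<in> M \<times> N"
  shows tensor_map_in_tensor: "tensor_map M N R k X \<in> tensor M N R"
    and mult_map_tensor_map:
      "(\<And>p. p \<in> M \<times> N \<Longrightarrow> mult_pair (k p) = b * mult_pair p * c) \<Longrightarrow>
         mult_map (tensor_map M N R k X) = (b * mult_map X * c :: 'r::ring_1)"
proof -
  let ?f = "SOME f. f \<in> X"
  have f: "?f \<in> formal_sums M N" by (rule tensor_some_rep(1)[OF assms(1)])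
  have fk: "frag_extend (\<lambda>p. frag_of (k p)) ?f \<in> formal_sums M N"
    by (rule formal_sums_frag_extend[OF f closed])
  then show "tensor_map M N R k X \<in> tensor M N R"
    unfolding tensor_map_def by (rule tensor_class_in_tensor)
  assume compat: "\<And>p. p \<in> M \<times> N \<Longrightarrow> mult_pair (k p) = b * mult_pair p * c"
  have "mult_map (tensor_map M N R k X) = frag_sum (mult_pair \<circ> k) ?f"
    unfolding tensor_map_def by (simp add: mult_map_tensor_class[OF fk] frag_sum_frag_extend)
  also have "\<dots> = frag_sum (\<lambda>p. b * mult_pair p * c) ?f"
    using f compat by (intro frag_sum_cong) (auto simp: formal_sums_def)
  also have "\<dots> = b * mult_map X * c"
    by (simp add: frag_sum_sandwich mult_map_eq_frag_sum)
  finally show "mult_map (tensor_map M N R k X) = (b * mult_map X * c :: 'r)" .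
qed

lemma bimod_iso_inv_into:
  assumes iso: "bimod_iso A X plusX actX Y plusY actY u"
    and plus_closed: "\<And>x x'. x \<in> X \<Longrightarrow> x' \<in> X \<Longrightarrow> plusX x x' \<in> X"
    and act_closed: "\<And>b c x. b \<in> A \<Longrightarrow> c \<in> A \<Longrightarrow> x \<in> X \<Longrightarrow> actX b c x \<in> X"
  shows "bimod_iso A Y plusY actY X plusX actX (inv_into X u)"
proof -
  have bij: "bij_betw u X Y"
    and u_plus: "\<And>x x'. x \<in> X \<Longrightarrow> x' \<in> X \<Longrightarrow> u (plusX x x') = plusY (u x) (u x')"
    and u_act: "\<And>b c x. b \<in> A \<Longrightarrow> c \<in> A \<Longrightarrow> x \<in> X \<Longrightarrow> u (actX b c x) = actY b c (u x)"
    using iso unfolding bimod_iso_def by blast+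
  let ?v = "inv_into X u"
  have v: "?v y \<in> X" "u (?v y) = y" if "y \<in> Y" for y
    using bij that by (auto simp: bij_betw_def intro: inv_into_into f_inv_into_f)
  have v_u: "?v (u x) = x" if "x \<in> X" for x
    using bij that by (simp add: bij_betw_def)
  show ?thesis
    unfolding bimod_iso_def
  proof (intro conjI ballI)
    show "bij_betw ?v Y X" by (rule bij_betw_inv_into[OF bij])
  next
    fix y y' assume "y \<in> Y" "y' \<in> Y"
    then show "?v (plusY y y') = plusX (?v y) (?v y')"
      using v u_plus[of "?v y" "?v y'"] v_u[OF plus_closed] by metis
  next
    fix b c y assume "b \<in> A" "c \<in> A" "y \<in> Y"
    then show "?v (actY b c y) = actX b c (?v y)"
      using v u_act[of b c "?v y"] v_u[OF act_closed] by metis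
  qed
qed

lemma bimod_iso_tensor_mult_map:
  fixes E :: "'r::ring_1 set"
  assumes bij: "bij_betw mult_map (tensor M N R) E"
    and closed: "\<And>b c p. b \<in> A \<Longrightarrow> c \<in> A \<Longrightarrow> p \<in> M \<times> N \<Longrightarrow> k b c p \<in> M \<times> N"
    and compat: "\<And>b c p. b \<in> A \<Longrightarrow> c \<in> A \<Longrightarrow> p \<in> M \<times> N \<Longrightarrow>
                   mult_pair (k b c p) = b * mult_pair p * c"
  shows "\<exists>\<psi>. bimod_iso A E (+) (\<lambda>b c x. b * x * c) (tensor M N R) (tensor_plus M N R)
            (\<lambda>b c. tensor_map M N R (k b c)) \<psi>"
proof -
  have "bimod_iso A (tensor M N R) (tensor_plus M N R) (\<lambda>b c. tensor_map M N R (k b c))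
          E (+) (\<lambda>b c x. b * x * c) mult_map"
    unfolding bimod_iso_def
    using bij mult_map_tensor_plus mult_map_tensor_map[OF _ closed compat] by blast
  then have "bimod_iso A E (+) (\<lambda>b c x. b * x * c) (tensor M N R) (tensor_plus M N R)
      (\<lambda>b c. tensor_map M N R (k b c)) (inv_into (tensor M N R) mult_map)"
    by (rule bimod_iso_inv_into) (simp_all add: tensor_plus_in_tensor tensor_map_in_tensor closed)
  then show ?thesis by blast
qed

definition commuting :: "'a::times set \<Rightarrow> 'a set \<Rightarrow> bool" where
  "commuting M N \<longleftrightarrow> (\<forall>m\<in>M. \<forall>n\<in>N. m * n = n * m)"

definition frag_swap :: "('a \<times> 'b \<Rightarrow>\<^sub>0 int) \<Rightarrow> ('b \<times> 'a \<Rightarrow>\<^sub>0 int)" where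
  "frag_swap f = frag_extend (\<lambda>p. frag_of (prod.swap p)) f"

lemma frag_swap_frag_of [simp]: "frag_swap (frag_of p) = frag_of (prod.swap p)"
  by (simp add: frag_swap_def)

lemma frag_swap_add: "frag_swap (f + g) = frag_swap f + frag_swap g"
  by (simp add: frag_swap_def frag_extend_add)

lemma frag_swap_diff: "frag_swap (f - g) = frag_swap f - frag_swap g"
  by (simp add: frag_swap_def frag_extend_diff)

lemma frag_swap_frag_swap [simp]: "frag_swap (frag_swap f) = f"
proof -
  have "frag_swap (frag_swap f) = frag_extend (frag_of \<circ> prod.swap \<circ> prod.swap) f"
    unfolding frag_swap_def using frag_extend_compose[of "frag_of \<circ> prod.swap" prod.swap f]
    by (simp add: comp_def)
  also have "\<dots> = f" by (simp add: comp_def frag_expansion[symmetric])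
  finally show ?thesis .
qed

lemma frag_swap_formal_sums: "f \<in> formal_sums M N \<Longrightarrow> frag_swap f \<in> formal_sums N M"
  unfolding frag_swap_def by (rule formal_sums_frag_extend) auto

lemma frag_sum_mult_frag_swap:
  assumes "f \<in> formal_sums M N" "commuting M N"
  shows "frag_sum mult_pair (frag_swap f) = (frag_sum mult_pair f :: 'r::ring_1)"
proof -
  have "frag_sum mult_pair (frag_swap f) = frag_sum (mult_pair \<circ> prod.swap) f"
    unfolding frag_swap_def by (rule frag_sum_frag_extend)
  also have "\<dots> = frag_sum mult_pair f"
  proof (rule frag_sum_cong)
    fix p assume "p \<in> Poly_Mapping.keys f"
    then have "fst p \<in> M" "snd p \<in> N" using assms(1) by (auto simp: formal_sums_def)
    then show "(mult_pair \<circ> prod.swap) p = mult_pair p"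
      using assms(2) unfolding commuting_def by (metis comp_apply fst_swap snd_swap)
  qed
  finally show ?thesis .
qed

text \<open>The balancing relation m r \<otimes> n = m \<otimes> r n turns into n \<otimes> m r = r n \<otimes> m under the
flip, which is a balancing relation of N \<otimes> M only once r is moved across m and n.\<close>

lemma frag_swap_tensor_gens:
  fixes M N R :: "'r::ring_1 set"
  assumes "commuting M R" "commuting N R" "g \<in> tensor_gens M N R"
  shows "frag_swap g \<in> tensor_rels N M R"
proof -
  from assms(3) consider
      (additive_left) m1 m2 n where
        "g = frag_of (m1 + m2, n) - frag_of (m1, n) - frag_of (m2, n)" "m1 \<in> M" "m2 \<in> M" "n \<in> N"
    | (additive_right) m n1 n2 where
        "g = frag_of (m, n1 + n2) - frag_of (m, n1) - frag_of (m, n2)" "m \<in> M" "n1 \<in> N" "n2 \<in> N"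
    | (balanced) m r n where "g = frag_of (m * r, n) - frag_of (m, r * n)" "m \<in> M" "r \<in> R" "n \<in> N"
    unfolding tensor_gens_def by blast
  then show ?thesis
  proof cases
    case additive_left
    then have "frag_swap g \<in> tensor_gens N M R"
      unfolding tensor_gens_def by (simp add: frag_swap_diff) blast
    then show ?thesis using tensor_gens_subset_rels by blast
  next
    case additive_right
    then have "frag_swap g \<in> tensor_gens N M R"
      unfolding tensor_gens_def by (simp add: frag_swap_diff) blast
    then show ?thesis using tensor_gens_subset_rels by blast
  next
    case balanced
    have "frag_of (n * r, m) - frag_of (n, r * m) \<in> tensor_gens N M R"
      using balanced unfolding tensor_gens_def by blast
    then have "- (frag_of (n * r, m) - frag_of (n, r * m)) \<in> tensor_rels N M R"
      using tensor_gens_subset_rels tensor_rels_uminus by blast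
    moreover have "m * r = r * m" "r * n = n * r"
      using assms(1,2) balanced unfolding commuting_def by metis+
    ultimately show ?thesis
      by (simp add: balanced(1) frag_swap_diff)
  qed
qed

lemma frag_swap_tensor_rels:
  fixes M N R :: "'r::ring_1 set"
  assumes "commuting M R" "commuting N R" "x \<in> tensor_rels M N R"
  shows "frag_swap x \<in> tensor_rels N M R"
  using assms(3)
proof (induction x rule: tensor_rels.induct)
  case zero
  then show ?case by (simp add: frag_swap_def tensor_rels.zero)
next
  case (add x g)
  then show ?case
    by (simp add: frag_swap_add tensor_rels_add frag_swap_tensor_gens[OF assms(1,2)])
next
  case (sub x g)
  then show ?case
    by (simp add: frag_swap_diff tensor_rels_diff frag_swap_tensor_gens[OF assms(1,2)])
qed

definition tensor_flip :: "'r::ring set \<Rightarrow> 'r set \<Rightarrow> 'r set \<Rightarrow>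
    (('r \<times> 'r) \<Rightarrow>\<^sub>0 int) set \<Rightarrow> (('r \<times> 'r) \<Rightarrow>\<^sub>0 int) set" where
  "tensor_flip M N R X = tensor_class N M R (frag_swap (SOME f. f \<in> X))"

lemma tensor_flip_in_tensor: "X \<in> tensor M N R \<Longrightarrow> tensor_flip M N R X \<in> tensor N M R"
  unfolding tensor_flip_def
  by (intro tensor_class_in_tensor frag_swap_formal_sums tensor_some_rep(1))

lemma tensor_flip_tensor_class:
  fixes M N R :: "'r::ring_1 set"
  assumes "commuting M R" "commuting N R" "f \<in> formal_sums M N"
  shows "tensor_flip M N R (tensor_class M N R f) = tensor_class N M R (frag_swap f)"
proof -
  let ?g = "SOME g. g \<in> tensor_class M N R f"
  have X: "tensor_class M N R f \<in> tensor M N R" by (rule tensor_class_in_tensor[OF assms(3)])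
  have g: "?g \<in> formal_sums M N" by (rule tensor_some_rep(1)[OF X])
  have "?g - f \<in> tensor_rels M N R"
    using tensor_some_rep(2)[OF X] tensor_class_eq_iff[OF g assms(3), where R = R] by simp
  then have "frag_swap ?g - frag_swap f \<in> tensor_rels N M R"
    using frag_swap_tensor_rels[OF assms(1,2)] by (simp add: frag_swap_diff[symmetric])
  then show ?thesis
    unfolding tensor_flip_def
    using tensor_class_eq_iff[OF frag_swap_formal_sums[OF g] frag_swap_formal_sums[OF assms(3)],
        where R = R]
    by simp
qed

lemma tensor_flip_tensor_flip:
  fixes M N R :: "'r::ring_1 set"
  assumes "commuting M R" "commuting N R" "X \<in> tensor M N R"
  shows "tensor_flip N M R (tensor_flip M N R X) = X"
proof -
  let ?f = "SOME f. f \<in> X"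
  have f: "?f \<in> formal_sums M N" and X: "X = tensor_class M N R ?f"
    using tensor_some_rep[OF assms(3)] by blast+
  show ?thesis
    using X tensor_flip_tensor_class[OF assms(1,2) f]
      tensor_flip_tensor_class[OF assms(2,1) frag_swap_formal_sums[OF f]]
    by simp
qed

lemma mult_map_tensor_flip:
  assumes "commuting M N" "X \<in> tensor M N R"
  shows "mult_map (tensor_flip M N R X) = (mult_map X :: 'r::ring_1)"
  unfolding tensor_flip_def mult_map_eq_frag_sum[of X]
  using tensor_some_rep(1)[OF assms(2)]
  by (simp add: mult_map_tensor_class frag_swap_formal_sums frag_sum_mult_frag_swap assms(1))

lemma bij_betw_mult_map_tensor_flip:
  fixes E :: "'r::ring_1 set"
  assumes "bij_betw mult_map (tensor M N R) E"
    and "commuting M R" "commuting N R" "commuting M N"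
  shows "bij_betw mult_map (tensor N M R) E"
proof -
  have "bij_betw (tensor_flip M N R) (tensor M N R) (tensor N M R)"
    by (rule bij_betw_byWitness[where f' = "tensor_flip N M R"])
      (auto simp: assms(2,3) tensor_flip_tensor_flip tensor_flip_in_tensor)
  moreover have "bij_betw (mult_map \<circ> tensor_flip M N R) (tensor M N R) E"
    using assms(1) by (rule bij_betw_cong[THEN iffD1, rotated])
      (simp add: mult_map_tensor_flip assms(4))
  ultimately show ?thesis
    using bij_betw_comp_iff by blast
qed

lemma bimod_iso_act_right_factor:
  fixes E :: "'r::ring_1 set"
  assumes "bij_betw mult_map (tensor M N R) E" "commuting M A"
    and "\<And>a b c. a \<in> N \<Longrightarrow> b \<in> A \<Longrightarrow> c \<in> A \<Longrightarrow> b * a * c \<in> N"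
  shows "\<exists>\<psi>. bimod_iso A E (+) (\<lambda>b c x. b * x * c) (tensor M N R) (tensor_plus M N R)
            (act_right_factor M N R) \<psi>"
  unfolding act_right_factor_def
proof (rule bimod_iso_tensor_mult_map[OF assms(1)])
  fix b c p assume "b \<in> A" "c \<in> A" "p \<in> M \<times> N"
  then show "(\<lambda>(e, a). (e, b * a * c)) p \<in> M \<times> N" using assms(3) by auto
next
  fix b c p assume "b \<in> A" "c \<in> A" "p \<in> M \<times> N"
  then obtain e a where "p = (e, a)" "e * b = b * e" using assms(2) by (auto simp: commuting_def)
  then show "mult_pair ((\<lambda>(e, a). (e, b * a * c)) p) = b * mult_pair p * c"
    by (simp flip: mult.assoc)
qed

lemma bimod_iso_act_left_factor:
  fixes E :: "'r::ring_1 set"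
  assumes "bij_betw mult_map (tensor M N R) E" "commuting N A"
    and "\<And>a b c. a \<in> M \<Longrightarrow> b \<in> A \<Longrightarrow> c \<in> A \<Longrightarrow> b * a * c \<in> M"
  shows "\<exists>\<phi>. bimod_iso A E (+) (\<lambda>b c x. b * x * c) (tensor M N R) (tensor_plus M N R)
            (act_left_factor M N R) \<phi>"
  unfolding act_left_factor_def
proof (rule bimod_iso_tensor_mult_map[OF assms(1)])
  fix b c p assume "b \<in> A" "c \<in> A" "p \<in> M \<times> N"
  then show "(\<lambda>(a, e). (b * a * c, e)) p \<in> M \<times> N" using assms(3) by auto
next
  fix b c p assume "b \<in> A" "c \<in> A" "p \<in> M \<times> N"
  then obtain a e where "p = (a, e)" "e * c = c * e" using assms(2) by (auto simp: commuting_def)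
  then show "mult_pair ((\<lambda>(a, e). (b * a * c, e)) p) = b * mult_pair p * c"
    by (simp add: mult.assoc)
qed

theorem proposition4p13:
  fixes A :: "'r::ring_1 set" and D :: 'r
  assumes "unital_subring A"
    and "fg_projective (centre A) (centralizer_in A (one_forms A D))"
    and "bij_betw mult_map
           (tensor (centralizer_in A (one_forms A D)) A (centre A)) (one_forms A D)"
  shows "(\<exists>\<phi>. bimod_iso A (one_forms A D) (+) (\<lambda>b c x. b * x * c)
            (tensor A (centralizer_in A (one_forms A D)) (centre A))
            (tensor_plus A (centralizer_in A (one_forms A D)) (centre A))
            (act_left_factor A (centralizer_in A (one_forms A D)) (centre A)) \<phi>)
       \<and> (\<exists>\<psi>. bimod_iso A (one_forms A D) (+) (\<lambda>b c x. b * x * c)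
            (tensor (centralizer_in A (one_forms A D)) A (centre A))
            (tensor_plus (centralizer_in A (one_forms A D)) A (centre A))
            (act_right_factor (centralizer_in A (one_forms A D)) A (centre A)) \<psi>)"
proof -
  let ?Z = "centre A" and ?ZE = "centralizer_in A (one_forms A D)"
  have sandwich_closed: "b * a * c \<in> A" if "a \<in> A" "b \<in> A" "c \<in> A" for a b c
    using assms(1) that unfolding unital_subring_def by blast
  have ZE_A: "commuting ?ZE A" by (simp add: commuting_def centralizer_in_def)
  have A_Z: "commuting A ?Z" by (simp add: commuting_def centre_def)
  have ZE_Z: "commuting ?ZE ?Z" using ZE_A by (auto simp: commuting_def centre_def)
  have bij_flipped: "bij_betw mult_map (tensor A ?ZE ?Z) (one_forms A D)"
    by (rule bij_betw_mult_map_tensor_flip[OF assms(3) ZE_Z A_Z ZE_A])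
  show ?thesis
    using bimod_iso_act_left_factor[OF bij_flipped ZE_A sandwich_closed]
      bimod_iso_act_right_factor[OF assms(3) ZE_A sandwich_closed]
    by blast
qed

end
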